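(* Let $q$ be a prime power. For any real $R$ with $0 \leq R \leq \frac{1}{2}\log_q\!\left(\frac{q^2}{q^2-q+1}\right)$, there exists an infinite sequence of minimal linear $[n,k]$ codes over $\mathbb{F}_q$ (with lengths $n$ unbounded) whose rates $k/n$ attain $R$ (i.e. $k/n \to R$ along the sequence, with $k/n \le \frac{1}{2}\log_q\!\left(\frac{q^2}{q^2-q+1}\right)$).
   Context: A linear $[n,k]$ code over $\mathbb{F}_q$ is a $k$-dimensional subspace of $\mathbb{F}_q^n$; its rate is $k/n$. The support of $c \in \mathbb{F}_q^n$ is $\mathrm{supp}(c) = \{ i \in \{1,\dots,n\} : c_i \neq 0\}$. A codeword $c \in C$ is minimal if for every $c' \in C$, $\mathrm{supp}(c') \subseteq \mathrm{supp}(c)$ implies that $c$ and $c'$ are linearly dependent. A linear code $C$ is minimal if every nonzero codeword of $C$ is minimal. *)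

theory Defs
  imports "HOL-Analysis.Analysis" "HOL-Library.Function_Algebras"
begin

text \<open>Vectors of length n over a field are modelled as functions nat => 'a that
vanish outside {0..<n}. Scalar multiplication is componentwise.\<close>

definition fscale :: "'a::field \<Rightarrow> (nat \<Rightarrow> 'a) \<Rightarrow> (nat \<Rightarrow> 'a)" where
  "fscale c x = (\<lambda>i. c * x i)"

lemma fscale_vector_space: "vector_space fscale"
  by unfold_locales (auto simp: fscale_def fun_eq_iff algebra_simps)

definition ambient :: "nat \<Rightarrow> (nat \<Rightarrow> 'a::zero) set" where
  "ambient n = {x. \<forall>i. n \<le> i \<longrightarrow> x i = 0}"

definition linear_code :: "nat \<Rightarrow> nat \<Rightarrow> (nat \<Rightarrow> 'a::field) set \<Rightarrow> bool" where
  "linear_code n k C \<longleftrightarrow> C \<subseteq> ambient n \<and> module.subspace fscale C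
      \<and> vector_space.dim fscale C = k"

definition supp :: "nat \<Rightarrow> (nat \<Rightarrow> 'a::zero) \<Rightarrow> nat set" where
  "supp n c = {i \<in> {1..n}. c (i - 1) \<noteq> 0}"

definition lin_dep2 :: "(nat \<Rightarrow> 'a::field) \<Rightarrow> (nat \<Rightarrow> 'a) \<Rightarrow> bool" where
  "lin_dep2 c c' \<longleftrightarrow> (\<exists>a b. (a \<noteq> 0 \<or> b \<noteq> 0) \<and> fscale a c + fscale b c' = 0)"

definition minimal_codeword :: "nat \<Rightarrow> (nat \<Rightarrow> 'a::field) set \<Rightarrow> (nat \<Rightarrow> 'a) \<Rightarrow> bool" where
  "minimal_codeword n C c \<longleftrightarrow> c \<in> C \<and> (\<forall>c'\<in>C. supp n c' \<subseteq> supp n c \<longrightarrow> lin_dep2 c c')"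

definition minimal_code :: "nat \<Rightarrow> (nat \<Rightarrow> 'a::field) set \<Rightarrow> bool" where
  "minimal_code n C \<longleftrightarrow> (\<forall>c\<in>C. c \<noteq> 0 \<longrightarrow> minimal_codeword n C c)"

end

(*
  Fix columns G 0, ..., G (n - 1) in F_q^k and take the code of all words (<G i, u>)_{i<n},
  u in F_q^k.  It is minimal as soon as the columns separate every non-proportional pair (u, v),
  i.e. some column is orthogonal to u but not to v: then the codeword of v is nonzero at a
  position where the codeword of u vanishes.  For fixed (u, v) the pair (<r, u>, <r, v>) is
  uniformly distributed on F_q^2 when r ranges over F_q^k, so a random column fails to separate
  (u, v) with probability (q^2 - q + 1)/q^2.  A union bound over the fewer than q^(2k) pairs
  yields separating columns whenever q^(2k) ((q^2 - q + 1)/q^2)^n <= 1, that is, whenever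
  k/n <= 1/2 log_q (q^2/(q^2 - q + 1)).  For k <> 1 separation also makes the encoding
  injective, so the code has dimension k.
  Taking k = floor (R n) gives rates tending to R.
*)

theory Submission
  imports Defs
begin

definition vectors :: "nat \<Rightarrow> 'b set \<Rightarrow> (nat \<Rightarrow> 'b::zero) set" where
  "vectors n A = {f. (\<forall>i<n. f i \<in> A) \<and> (\<forall>i\<ge>n. f i = 0)}"

lemma bij_betw_vectors_PiE:
  "bij_betw (\<lambda>f. restrict f {..<n}) (vectors n A) ({..<n} \<rightarrow>\<^sub>E A)"
proof (rule bij_betwI[where g = "\<lambda>g i. if i < n then g i else 0"])
  show "(\<lambda>f. restrict f {..<n}) \<in> vectors n A \<rightarrow> {..<n} \<rightarrow>\<^sub>E A"
    by (auto simp: vectors_def)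
  show "(\<lambda>g i. if i < n then g i else 0) \<in> ({..<n} \<rightarrow>\<^sub>E A) \<rightarrow> vectors n A"
    by (rule funcsetI) (auto simp: vectors_def dest: PiE_mem)
  show "(\<lambda>g i. if i < n then g i else 0) (restrict f {..<n}) = f" if "f \<in> vectors n A" for f
    using that by (auto simp: vectors_def fun_eq_iff)
  show "restrict (\<lambda>i. if i < n then g i else 0) {..<n} = g" if "g \<in> {..<n} \<rightarrow>\<^sub>E A" for g
    by (rule ext) (simp add: restrict_def PiE_arb[OF that])
qed

lemma finite_vectors: "finite A \<Longrightarrow> finite (vectors n A)"
  using bij_betw_finite[OF bij_betw_vectors_PiE] by (auto intro: finite_PiE)

lemma card_vectors: "finite A \<Longrightarrow> card (vectors n A) = card A ^ n"
  using bij_betw_same_card[OF bij_betw_vectors_PiE] by (simp add: card_PiE)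

lemma ambient_eq_vectors: "ambient n = vectors n UNIV"
  by (auto simp: ambient_def vectors_def)

lemma finite_ambient: "finite (ambient k :: (nat \<Rightarrow> 'a::{finite,zero}) set)"
  by (simp add: ambient_eq_vectors finite_vectors)

lemma card_ambient: "card (ambient k :: (nat \<Rightarrow> 'a::{finite,zero}) set) = CARD('a) ^ k"
  unfolding ambient_eq_vectors by (rule card_vectors) simp

lemma ambient_add: "r \<in> ambient k \<Longrightarrow> s \<in> ambient k \<Longrightarrow> (r::nat\<Rightarrow>'a::monoid_add) + s \<in> ambient k"
  by (auto simp: ambient_def)

lemma ambient_diff: "r \<in> ambient k \<Longrightarrow> s \<in> ambient k \<Longrightarrow> (r::nat\<Rightarrow>'a::ab_group_add) - s \<in> ambient k"
  by (auto simp: ambient_def)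

lemma two_le_card_field: "2 \<le> CARD('a::{finite,field})"
proof -
  have "card {0::'a, 1} \<le> CARD('a)" by (intro card_mono) auto
  then show ?thesis by simp
qed

definition dot :: "nat \<Rightarrow> (nat \<Rightarrow> 'a::field) \<Rightarrow> (nat \<Rightarrow> 'a) \<Rightarrow> 'a" where
  "dot k r u = (\<Sum>j<k. r j * u j)"

lemma dot_add: "dot k (r + s) u = dot k r u + dot k s u"
  by (simp add: dot_def distrib_right sum.distrib)

lemma dot_diff: "dot k (r - s) u = dot k r u - dot k s u"
  by (simp add: dot_def left_diff_distrib sum_subtractf)

lemma nonzero_minor_if_not_lin_dep2:
  fixes u v :: "nat \<Rightarrow> 'a::field"
  assumes u: "u \<in> ambient k" and v: "v \<in> ambient k" and nd: "\<not> lin_dep2 u v"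
  obtains j1 j2 where "j1 < k" "j2 < k" "u j1 * v j2 - u j2 * v j1 \<noteq> 0"
proof -
  have "\<exists>j0<k. v j0 \<noteq> 0"
  proof (rule ccontr)
    assume "\<not> ?thesis"
    with v have "v = 0" by (auto simp: ambient_def fun_eq_iff) (meson leI)
    then have "lin_dep2 u v" unfolding lin_dep2_def
      by (intro exI[of _ 0] exI[of _ 1]) (auto simp: fscale_def fun_eq_iff)
    with nd show False by simp
  qed
  then obtain j0 where j0: "j0 < k" "v j0 \<noteq> 0" by blast
  have "\<exists>j<k. u j * v j0 - u j0 * v j \<noteq> 0"
  proof (rule ccontr)
    assume "\<not> ?thesis"
    then have "fscale (v j0) u + fscale (- u j0) v = 0"
      using u v by (auto simp: fscale_def ambient_def fun_eq_iff algebra_simps not_less)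
        (metis mult_zero_left mult_zero_right)
    with j0 nd show False unfolding lin_dep2_def by blast
  qed
  with j0 that show thesis by blast
qed

text \<open>Cramer's rule on the coordinates of a nonvanishing \<open>2 \<times> 2\<close> minor.\<close>
lemma dot_pair_surj:
  fixes u v :: "nat \<Rightarrow> 'a::field"
  assumes "u \<in> ambient k" and "v \<in> ambient k" and "\<not> lin_dep2 u v"
  shows "\<exists>r\<in>ambient k. dot k r u = a \<and> dot k r v = b"
proof -
  obtain j1 j2 where j: "j1 < k" "j2 < k" and d: "u j1 * v j2 - u j2 * v j1 \<noteq> 0"
    using nonzero_minor_if_not_lin_dep2[OF assms] .
  define \<delta> where "\<delta> = u j1 * v j2 - u j2 * v j1"
  define x where "x = (a * v j2 - b * u j2) / \<delta>"
  define y where "y = (b * u j1 - a * v j1) / \<delta>"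
  define r where "r = (\<lambda>i. (if i = j1 then x else 0) + (if i = j2 then y else (0::'a)))"
  have r: "r \<in> ambient k" using j by (auto simp: r_def ambient_def)
  have "j1 \<noteq> j2" and \<delta>: "\<delta> \<noteq> 0" using d by (auto simp: \<delta>_def)
  have dot_r: "dot k r w = x * w j1 + y * w j2" for w
  proof -
    have "dot k r w = (\<Sum>j<k. (if j = j1 then x * w j else 0)) + (\<Sum>j<k. (if j = j2 then y * w j else 0))"
      unfolding dot_def r_def sum.distrib[symmetric] by (intro sum.cong) (auto simp: distrib_right)
    with j show ?thesis by simp
  qed
  have "x * u j1 + y * u j2 = ((a * v j2 - b * u j2) * u j1 + (b * u j1 - a * v j1) * u j2) / \<delta>"
    "x * v j1 + y * v j2 = ((a * v j2 - b * u j2) * v j1 + (b * u j1 - a * v j1) * v j2) / \<delta>"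
    unfolding x_def y_def by (simp_all add: add_divide_distrib)
  moreover have "(a * v j2 - b * u j2) * u j1 + (b * u j1 - a * v j1) * u j2 = a * \<delta>"
    "(a * v j2 - b * u j2) * v j1 + (b * u j1 - a * v j1) * v j2 = b * \<delta>"
    unfolding \<delta>_def by (simp_all add: algebra_simps)
  ultimately have "x * u j1 + y * u j2 = a" "x * v j1 + y * v j2 = b" using \<delta> by simp_all
  with r dot_r show ?thesis by auto
qed

lemma card_dot_fiber:
  fixes u v :: "nat \<Rightarrow> 'a::{finite,field}"
  assumes u: "u \<in> ambient k" and v: "v \<in> ambient k" and nd: "\<not> lin_dep2 u v"
  shows "card {r\<in>ambient k. dot k r u = a \<and> dot k r v = b} * CARD('a)^2 = CARD('a)^k"
proof -
  define F where "F y = {r\<in>ambient k. (dot k r u, dot k r v) = y}" for y :: "'a \<times> 'a"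
  have card_F: "card (F y) = card (F (0, 0))" for y
  proof -
    obtain r0 where r0: "r0 \<in> ambient k" "dot k r0 u = fst y" "dot k r0 v = snd y"
      using dot_pair_surj[OF u v nd] by blast
    have "F y = (\<lambda>r. r + r0) ` F (0, 0)"
    proof (rule set_eqI, rule iffI)
      fix r assume r: "r \<in> F y"
      then have "r - r0 \<in> F (0, 0)" using r0 by (auto simp: F_def ambient_diff dot_diff)
      moreover have "r = (r - r0) + r0" by simp
      ultimately show "r \<in> (\<lambda>r. r + r0) ` F (0, 0)" by blast
    next
      fix r assume "r \<in> (\<lambda>r. r + r0) ` F (0, 0)"
      then show "r \<in> F y" using r0 by (cases y) (auto simp: F_def ambient_add dot_add)
    qed
    moreover have "inj_on (\<lambda>r. r + r0) (F (0, 0))" by (auto intro: inj_onI)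
    ultimately show ?thesis by (simp add: card_image)
  qed
  have "CARD('a)^k = card (\<Union>y. F y)"
    unfolding card_ambient[symmetric] by (rule arg_cong[where f = card]) (auto simp: F_def)
  also have "\<dots> = (\<Sum>y\<in>UNIV. card (F y))"
    by (rule card_UN_disjoint) (auto simp: F_def finite_ambient)
  also have "\<dots> = (\<Sum>y\<in>(UNIV :: ('a \<times> 'a) set). card (F (0, 0)))"
    by (intro sum.cong refl) (rule card_F)
  also have "\<dots> = CARD('a \<times> 'a) * card (F (a, b))"
    by (simp only: sum_constant of_nat_id card_F[of "(a, b)"])
  also have "CARD('a \<times> 'a) = CARD('a)^2"
    by (simp only: UNIV_Times_UNIV[symmetric] card_cartesian_product power2_eq_square)
  also have "F (a, b) = {r\<in>ambient k. dot k r u = a \<and> dot k r v = b}"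
    by (simp add: F_def)
  finally show ?thesis by (simp only: mult.commute)
qed

lemma card_dot_zero_nonzero:
  fixes u v :: "nat \<Rightarrow> 'a::{finite,field}"
  assumes "u \<in> ambient k" and "v \<in> ambient k" and "\<not> lin_dep2 u v"
  shows "card {r\<in>ambient k. dot k r u = 0 \<and> dot k r v \<noteq> 0} * CARD('a)^2
    = (CARD('a) - 1) * CARD('a)^k"
proof -
  define F where "F b = {r\<in>ambient k. dot k r u = 0 \<and> dot k r v = b}" for b :: 'a
  have "card {r\<in>ambient k. dot k r u = 0 \<and> dot k r v \<noteq> 0} = card (\<Union>b\<in>UNIV - {0}. F b)"
    by (rule arg_cong[where f = card]) (auto simp: F_def)
  also have "\<dots> = (\<Sum>b\<in>UNIV - {0}. card (F b))"
    by (rule card_UN_disjoint) (auto simp: F_def finite_ambient)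
  finally have "card {r\<in>ambient k. dot k r u = 0 \<and> dot k r v \<noteq> 0} * CARD('a)^2
      = (\<Sum>b\<in>UNIV - {0}. card (F b) * CARD('a)^2)"
    by (simp add: sum_distrib_right)
  also have "\<dots> = (\<Sum>b\<in>UNIV - {0::'a}. CARD('a)^k)"
    using card_dot_fiber[OF assms] by (simp add: F_def)
  also have "\<dots> = (CARD('a) - 1) * CARD('a)^k"
    by (simp add: card_Diff_singleton)
  finally show ?thesis .
qed

lemma card_not_separated:
  fixes u v :: "nat \<Rightarrow> 'a::{finite,field}"
  assumes "u \<in> ambient k" and "v \<in> ambient k" and "\<not> lin_dep2 u v"
  shows "card {r\<in>ambient k. dot k r v \<noteq> 0 \<longrightarrow> dot k r u \<noteq> 0} * CARD('a)^2
    = CARD('a)^k * (CARD('a)^2 - CARD('a) + 1)"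
proof -
  define q where "q = CARD('a)"
  define S where "S = {r\<in>ambient k. dot k r v \<noteq> 0 \<longrightarrow> dot k r u \<noteq> 0}"
  define T where "T = {r\<in>ambient k. dot k r u = 0 \<and> dot k r v \<noteq> 0}"
  have "card S + card T = card (S \<union> T)"
    by (rule card_Un_disjoint[symmetric]) (auto simp: S_def T_def finite_ambient)
  also have "S \<union> T = ambient k" by (auto simp: S_def T_def)
  finally have "card S + card T = q^k" by (simp add: card_ambient q_def)
  then have "card S * q^2 + card T * q^2 = q^k * q^2"
    by (simp only: add_mult_distrib[symmetric])
  moreover have "card T * q^2 = (q - 1) * q^k"
    using card_dot_zero_nonzero[OF assms] unfolding T_def q_def .
  ultimately have count: "card S * q^2 + (q - 1) * q^k = q^k * q^2"
    by (simp only:)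
  have "q^2 - q + 1 + (q - 1) = q^2"
    using two_le_card_field[where 'a='a] by (simp add: q_def power2_eq_square)
  moreover have "q^k * (q^2 - q + 1) + (q - 1) * q^k = q^k * (q^2 - q + 1 + (q - 1))"
    unfolding distrib_left by (simp add: mult.commute)
  ultimately have "q^k * (q^2 - q + 1) + (q - 1) * q^k = q^k * q^2" by (simp only:)
  with count have "card S * q^2 + (q - 1) * q^k = q^k * (q^2 - q + 1) + (q - 1) * q^k"
    by (rule trans[OF _ sym])
  then have "card S * q^2 = q^k * (q^2 - q + 1)" by (rule add_right_imp_eq)
  then show ?thesis by (simp only: S_def q_def)
qed

lemma card_not_lin_dep2_pairs_less:
  "card {p \<in> ambient k \<times> (ambient k :: (nat \<Rightarrow> 'a::{finite,field}) set). \<not> lin_dep2 (fst p) (snd p)}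
    < CARD('a)^(2*k)"
proof -
  define V where "V = (ambient k :: (nat \<Rightarrow> 'a) set)"
  have "lin_dep2 0 (0 :: nat \<Rightarrow> 'a)"
    unfolding lin_dep2_def by (auto intro!: exI[of _ 1] simp: fscale_def fun_eq_iff)
  moreover have "(0, 0) \<in> V \<times> V" by (auto simp: V_def ambient_def)
  ultimately have "{p \<in> V \<times> V. \<not> lin_dep2 (fst p) (snd p)} \<subset> V \<times> V" by force
  then have "card {p \<in> V \<times> V. \<not> lin_dep2 (fst p) (snd p)} < card (V \<times> V)"
    by (rule psubset_card_mono[rotated]) (simp add: V_def finite_ambient)
  then show ?thesis
    by (simp add: V_def card_cartesian_product card_ambient power_add mult_2)
qed

definition separating :: "nat \<Rightarrow> nat \<Rightarrow> (nat \<Rightarrow> nat \<Rightarrow> 'a::field) \<Rightarrow> bool" where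
  "separating k n G \<longleftrightarrow> (\<forall>u\<in>ambient k. \<forall>v\<in>ambient k. \<not> lin_dep2 u v \<longrightarrow>
      (\<exists>i<n. dot k (G i) u = 0 \<and> dot k (G i) v \<noteq> 0))"

lemma exists_separating:
  assumes cond: "CARD('a)^(2*k) * (CARD('a)^2 - CARD('a) + 1)^n \<le> CARD('a)^(2*n)"
  shows "\<exists>G \<in> vectors n (ambient k :: (nat \<Rightarrow> 'a::{finite,field}) set). separating k n G"
proof -
  define q where "q = CARD('a)"
  define V where "V = (ambient k :: (nat \<Rightarrow> 'a) set)"
  define P where "P = {p \<in> V \<times> V. \<not> lin_dep2 (fst p) (snd p)}"
  define S where "S p = {r\<in>V. dot k r (snd p) \<noteq> 0 \<longrightarrow> dot k r (fst p) \<noteq> 0}" for p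
  define Bad where "Bad = (\<Union>p\<in>P. vectors n (S p))"
  have fin: "finite V" "finite P" "finite (S p)" for p
    by (simp_all add: V_def P_def S_def finite_ambient)
  have "card Bad \<le> (\<Sum>p\<in>P. card (vectors n (S p)))"
    unfolding Bad_def by (rule card_UN_le[OF fin(2)])
  then have "card Bad * q^(2*n) \<le> (\<Sum>p\<in>P. card (S p) ^ n) * q^(2*n)"
    by (simp add: card_vectors fin)
  also have "\<dots> = (\<Sum>p\<in>P. (card (S p) * q^2) ^ n)"
    by (simp add: sum_distrib_right power_mult_distrib power_mult)
  also have "\<dots> = (\<Sum>p\<in>P. (q^k * (q^2 - q + 1)) ^ n)"
  proof (intro sum.cong refl)
    fix p assume "p \<in> P"
    then have "fst p \<in> V" "snd p \<in> V" "\<not> lin_dep2 (fst p) (snd p)" by (auto simp: P_def)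
    then have "card (S p) * q^2 = q^k * (q^2 - q + 1)"
      unfolding S_def V_def q_def by (rule card_not_separated)
    then show "(card (S p) * q^2) ^ n = (q^k * (q^2 - q + 1)) ^ n" by (rule arg_cong)
  qed
  also have "\<dots> = card P * (q^k * (q^2 - q + 1)) ^ n" by simp
  also have "\<dots> < q^(2*k) * (q^k * (q^2 - q + 1)) ^ n"
    using card_not_lin_dep2_pairs_less[of k, where 'a='a] two_le_card_field[where 'a='a]
    by (simp add: P_def V_def q_def)
  also have "\<dots> = q^(2*k) * (q^2 - q + 1)^n * q^(k*n)"
    by (simp only: power_mult_distrib power_mult mult_ac)
  also have "\<dots> \<le> q^(2*n) * q^(k*n)" using cond by (simp add: q_def)
  finally have "card Bad < q^(k*n)" by (simp add: mult.commute)
  also have "q^(k*n) = card (vectors n V)"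
    using fin(1) by (simp add: card_vectors V_def card_ambient q_def power_mult)
  moreover have "finite Bad" by (simp add: Bad_def fin finite_vectors)
  ultimately obtain G where G: "G \<in> vectors n V" "G \<notin> Bad"
    by (metis card_mono not_le subsetI)
  have "separating k n G"
    unfolding separating_def
  proof (intro ballI impI)
    fix u v :: "nat \<Rightarrow> 'a" assume "u \<in> ambient k" "v \<in> ambient k" "\<not> lin_dep2 u v"
    then have "G \<notin> vectors n (S (u, v))" using G(2) by (auto simp: Bad_def P_def V_def)
    then obtain i where "i < n" "G i \<notin> S (u, v)" "G i \<in> V" using G(1) by (auto simp: vectors_def)
    then show "\<exists>i<n. dot k (G i) u = 0 \<and> dot k (G i) v \<noteq> 0" by (auto simp: S_def)
  qed
  with G(1) show ?thesis by (auto simp: V_def)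
qed

interpretation fs: vector_space fscale by (rule fscale_vector_space)

lemma sum_fun_apply: "sum f A i = (\<Sum>a\<in>A. f a i)"
  by (induction A rule: infinite_finite_induct) auto

definition unit_vec :: "nat \<Rightarrow> nat \<Rightarrow> 'a::field" where
  "unit_vec j = (\<lambda>i. if i = j then 1 else 0)"

lemma inj_unit_vec: "inj (unit_vec :: nat \<Rightarrow> nat \<Rightarrow> 'a::field)"
  by (rule injI) (metis unit_vec_def one_neq_zero)

lemma ambient_subspace: "fs.subspace (ambient k)"
  unfolding fs.subspace_def by (auto simp: ambient_def fscale_def)

lemma span_unit_vecs: "fs.span (unit_vec ` {..<k}) = (ambient k :: (nat \<Rightarrow> 'a::field) set)"
proof
  show "fs.span (unit_vec ` {..<k}) \<subseteq> (ambient k :: (nat \<Rightarrow> 'a) set)"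
    by (rule fs.span_minimal[OF _ ambient_subspace]) (auto simp: unit_vec_def ambient_def)
  show "(ambient k :: (nat \<Rightarrow> 'a) set) \<subseteq> fs.span (unit_vec ` {..<k})"
  proof
    fix x :: "nat \<Rightarrow> 'a" assume x: "x \<in> ambient k"
    have "x = (\<Sum>j<k. fscale (x j) (unit_vec j))"
      using x by (auto simp: fun_eq_iff sum_fun_apply fscale_def unit_vec_def ambient_def
          if_distrib[of "(*) _"] cong: if_cong)
    also have "\<dots> \<in> fs.span (unit_vec ` {..<k})"
      by (intro fs.span_sum fs.span_scale fs.span_base) auto
    finally show "x \<in> fs.span (unit_vec ` {..<k})" .
  qed
qed

lemma independent_unit_vecs: "fs.independent (unit_vec ` {..<k} :: (nat \<Rightarrow> 'a::field) set)"
proof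
  assume "fs.dependent (unit_vec ` {..<k} :: (nat \<Rightarrow> 'a) set)"
  then obtain c where c: "\<exists>w\<in>unit_vec ` {..<k}. c w \<noteq> (0::'a)"
      "(\<Sum>w\<in>unit_vec ` {..<k}. fscale (c w) w) = 0"
    by (auto simp: fs.dependent_finite)
  then obtain j0 where j0: "j0 < k" "c (unit_vec j0) \<noteq> 0" by auto
  have "0 = (\<Sum>w\<in>unit_vec ` {..<k}. fscale (c w) w) j0" using c by simp
  also have "\<dots> = (\<Sum>j<k. c (unit_vec j) * unit_vec j j0)"
    by (simp add: sum_fun_apply sum.reindex inj_on_subset[OF inj_unit_vec] fscale_def)
  also have "\<dots> = (\<Sum>j<k. if j = j0 then c (unit_vec j) else 0)"
    by (intro sum.cong) (auto simp: unit_vec_def)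
  also have "\<dots> = c (unit_vec j0)" using j0 by simp
  finally show False using j0 by simp
qed

lemma dim_linear_image_ambient:
  assumes "Vector_Spaces.linear fscale fscale f" and inj: "inj_on f (ambient k)"
  shows "fs.dim (f ` (ambient k :: (nat \<Rightarrow> 'a::field) set)) = k"
proof -
  interpret f: Vector_Spaces.linear fscale fscale f by fact
  have "fs.independent (f ` unit_vec ` {..<k})"
    using f.dependent_inj_imageD inj span_unit_vecs independent_unit_vecs by metis
  then have "fs.dim (f ` ambient k) = card (f ` unit_vec ` {..<k})"
    using fs.dim_span_eq_card_independent by (metis f.span_image span_unit_vecs)
  also have "\<dots> = k"
    using inj fs.span_superset card_image inj_on_subset[OF inj_unit_vec subset_UNIV]
    by (metis card_lessThan inj_on_subset span_unit_vecs)
  finally show ?thesis .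
qed

definition encode :: "nat \<Rightarrow> (nat \<Rightarrow> nat \<Rightarrow> 'a) \<Rightarrow> (nat \<Rightarrow> 'a) \<Rightarrow> (nat \<Rightarrow> 'a::field)" where
  "encode k G u = (\<lambda>i. dot k (G i) u)"

lemma linear_encode: "Vector_Spaces.linear fscale fscale (encode k G)"
  by unfold_locales
    (auto simp: encode_def dot_def fscale_def fun_eq_iff algebra_simps sum.distrib sum_distrib_left)

lemma encode_in_ambient: "G \<in> vectors n A \<Longrightarrow> encode k G u \<in> ambient n"
  by (auto simp: encode_def dot_def ambient_def vectors_def)

lemma not_lin_dep2_unit_vec:
  assumes "u j \<noteq> 0" "j' \<noteq> j"
  shows "\<not> lin_dep2 (unit_vec j') (u :: nat \<Rightarrow> 'a::field)"
proof
  assume "lin_dep2 (unit_vec j') u"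
  then obtain a b where ab: "a \<noteq> 0 \<or> b \<noteq> 0" "fscale a (unit_vec j') + fscale b u = 0"
    unfolding lin_dep2_def by blast
  from fun_cong[OF ab(2), of j] have "b = 0" using assms by (simp add: fscale_def unit_vec_def)
  with fun_cong[OF ab(2), of j'] have "a = 0" by (simp add: fscale_def unit_vec_def)
  with ab \<open>b = 0\<close> show False by simp
qed

text \<open>For \<open>k = 1\<close> every pair is proportional, so separation says nothing and the
  encoding may well vanish.\<close>
lemma inj_on_encode:
  assumes "k \<noteq> 1" and sep: "separating k n G"
  shows "inj_on (encode k G) (ambient k)"
proof -
  interpret L: Vector_Spaces.linear fscale fscale "encode k G" by (rule linear_encode)
  have "u = 0" if u: "u \<in> ambient k" and "encode k G u = 0" for u
  proof (rule ccontr)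
    assume "u \<noteq> 0"
    then obtain j where j: "u j \<noteq> 0" by (auto simp: fun_eq_iff func_zero)
    with u have "j < k" by (auto simp: ambient_def not_less[symmetric])
    define j' :: nat where "j' = (if j = 0 then 1 else 0)"
    have "unit_vec j' \<in> ambient k" using \<open>j < k\<close> \<open>k \<noteq> 1\<close> by (auto simp: j'_def unit_vec_def ambient_def)
    moreover have "\<not> lin_dep2 (unit_vec j') u" using j by (intro not_lin_dep2_unit_vec) (auto simp: j'_def)
    ultimately obtain i where "dot k (G i) u \<noteq> 0" using sep u by (auto simp: separating_def)
    with \<open>encode k G u = 0\<close> show False by (auto simp: encode_def fun_eq_iff)
  qed
  then show ?thesis using L.inj_on_iff_eq_0[OF ambient_subspace] by blast
qed

lemma lin_dep2_linear_image:
  assumes "Vector_Spaces.linear fscale fscale f" "lin_dep2 u v"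
  shows "lin_dep2 (f u) (f v)"
proof -
  interpret f: Vector_Spaces.linear fscale fscale f by fact
  from assms(2) obtain a b where "a \<noteq> 0 \<or> b \<noteq> 0" "fscale a u + fscale b v = 0"
    unfolding lin_dep2_def by blast
  moreover have "fscale a (f u) + fscale b (f v) = f (fscale a u + fscale b v)"
    by (simp add: f.add f.scale)
  ultimately show ?thesis unfolding lin_dep2_def by auto
qed

lemma supp_subset_nonzero:
  assumes "supp n c' \<subseteq> supp n c" "i < n" "c' i \<noteq> 0"
  shows "c i \<noteq> 0"
proof -
  have "Suc i \<in> supp n c'" using assms by (auto simp: supp_def)
  with assms(1) show ?thesis by (auto simp: supp_def)
qed

lemma minimal_code_encode:
  assumes sep: "separating k n G"
  shows "minimal_code n (encode k G ` ambient k)"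
  unfolding minimal_code_def minimal_codeword_def
proof (intro ballI impI conjI)
  fix c c' assume c: "c \<in> encode k G ` ambient k" and c': "c' \<in> encode k G ` ambient k"
    and supp: "supp n c' \<subseteq> supp n c"
  obtain u v where u: "u \<in> ambient k" "c = encode k G u" and v: "v \<in> ambient k" "c' = encode k G v"
    using c c' by blast
  show "lin_dep2 c c'"
  proof (cases "lin_dep2 u v")
    case True
    then show ?thesis using u v lin_dep2_linear_image[OF linear_encode] by blast
  next
    case False
    with sep u v obtain i where "i < n" "c i = 0" "c' i \<noteq> 0"
      by (force simp: separating_def encode_def)
    with supp_subset_nonzero[OF supp] show ?thesis by blast
  qed
qed

lemma exists_minimal_code:
  assumes "k \<noteq> 1"
    and cond: "CARD('a)^(2*k) * (CARD('a)^2 - CARD('a) + 1)^n \<le> CARD('a)^(2*n)"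
  shows "\<exists>C :: (nat \<Rightarrow> 'a::{finite,field}) set. linear_code n k C \<and> minimal_code n C"
proof -
  obtain G where G: "G \<in> vectors n (ambient k :: (nat \<Rightarrow> 'a) set)" and sep: "separating k n G"
    using exists_separating[OF cond] by blast
  interpret L: Vector_Spaces.linear fscale fscale "encode k G" by (rule linear_encode)
  have "linear_code n k (encode k G ` ambient k)"
    unfolding linear_code_def
    using encode_in_ambient[OF G] L.subspace_image[OF ambient_subspace]
      dim_linear_image_ambient[OF linear_encode inj_on_encode[OF \<open>k \<noteq> 1\<close> sep]]
    by blast
  with minimal_code_encode[OF sep] show ?thesis by blast
qed

definition rate_bound :: "real \<Rightarrow> real" where
  "rate_bound q = 1/2 * log q (q^2 / (q^2 - q + 1))"

lemma counting_condition_of_rate: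
  fixes q R :: real and k n :: nat
  assumes q: "q \<ge> 2" and kR: "real k \<le> R * real n" and R: "R \<le> rate_bound q"
  shows "q^(2*k) * (q^2 - q + 1)^n \<le> q^(2*n)"
proof -
  define D where "D = q^2 - q + 1"
  have "2 * q \<le> q * q" using q by (intro mult_right_mono) auto
  with q have D: "D > 0" unfolding D_def power2_eq_square by linarith
  have "R * real n \<le> rate_bound q * real n" using R by (rule mult_right_mono) simp
  with kR have le: "real (2*k) \<le> log q (q^2 / D) * real n"
    unfolding rate_bound_def D_def by simp
  have "q^(2*k) = q powr real (2*k)" using q by (simp only: powr_realpow)
  also have "\<dots> \<le> q powr (log q (q^2 / D) * real n)" using q le by (intro powr_mono) auto
  also have "\<dots> = (q powr log q (q^2 / D)) powr real n" by (simp add: powr_powr)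
  also have "\<dots> = (q^2 / D) ^ n" using q D by (simp add: powr_realpow)
  finally have "q^(2*k) * D^n \<le> (q^2)^n" using D by (simp add: power_divide pos_le_divide_eq)
  then show ?thesis by (simp add: D_def power_mult)
qed

lemma exists_minimal_code_of_rate:
  assumes "k \<noteq> 1" and "real k \<le> R * real n" and "R \<le> rate_bound (real CARD('a))"
  shows "\<exists>C :: (nat \<Rightarrow> 'a::{finite,field}) set. linear_code n k C \<and> minimal_code n C"
proof (rule exists_minimal_code[OF \<open>k \<noteq> 1\<close>])
  have q: "2 \<le> CARD('a)" by (rule two_le_card_field)
  then have "real (CARD('a)^2 - CARD('a) + 1) = real CARD('a) ^ 2 - real CARD('a) + 1"
    by (simp add: of_nat_diff power2_eq_square)
  moreover have "real CARD('a) ^ (2*k) * (real CARD('a) ^ 2 - real CARD('a) + 1) ^ n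
      \<le> real CARD('a) ^ (2*n)"
    by (rule counting_condition_of_rate) (use q assms(2,3) in auto)
  ultimately have "real (CARD('a)^(2*k) * (CARD('a)^2 - CARD('a) + 1)^n) \<le> real (CARD('a)^(2*n))"
    by (simp only: of_nat_mult of_nat_power)
  then show "CARD('a)^(2*k) * (CARD('a)^2 - CARD('a) + 1)^n \<le> CARD('a)^(2*n)"
    by (simp only: of_nat_le_iff)
qed

text \<open>Dimension \<open>1\<close>, which the separating construction cannot handle, is rounded down
  to \<open>0\<close>; this does not affect the limit of the rates.\<close>
definition code_dim :: "real \<Rightarrow> nat \<Rightarrow> nat" where
  "code_dim R m = (let d = nat \<lfloor>R * real (Suc m)\<rfloor> in if d = 1 then 0 else d)"

lemma code_dim_ne_1: "code_dim R m \<noteq> 1"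
  by (simp add: code_dim_def Let_def)

lemma code_dim_le: "0 \<le> R \<Longrightarrow> real (code_dim R m) \<le> R * real (Suc m)"
  by (simp add: code_dim_def Let_def)

lemma code_dim_ge: "0 \<le> R \<Longrightarrow> R * real (Suc m) - 2 \<le> real (code_dim R m)"
  by (simp add: code_dim_def Let_def) linarith

lemma code_dim_rate_le: "0 \<le> R \<Longrightarrow> real (code_dim R m) / real (Suc m) \<le> R"
  using code_dim_le by (simp add: pos_divide_le_eq del: of_nat_Suc)

lemma code_dim_rate_tendsto:
  assumes "0 \<le> R"
  shows "(\<lambda>m. real (code_dim R m) / real (Suc m)) \<longlonglongrightarrow> R"
proof (rule tendsto_sandwich[of "\<lambda>m. R - 2 / real (Suc m)" _ _ "\<lambda>_. R"])
  have "R - 2 / real (Suc m) \<le> real (code_dim R m) / real (Suc m)" for m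
  proof -
    have "R - 2 / real (Suc m) = (R * real (Suc m) - 2) / real (Suc m)"
      by (simp add: field_simps del: of_nat_Suc)
    also have "\<dots> \<le> real (code_dim R m) / real (Suc m)"
      using code_dim_ge[OF assms] by (intro divide_right_mono) auto
    finally show ?thesis .
  qed
  then show "\<forall>\<^sub>F m in sequentially. R - 2 / real (Suc m) \<le> real (code_dim R m) / real (Suc m)"
    by simp
  show "\<forall>\<^sub>F m in sequentially. real (code_dim R m) / real (Suc m) \<le> R"
    using code_dim_rate_le[OF assms] by simp
  have "(\<lambda>m. 2 / real (Suc m)) \<longlonglongrightarrow> 0"
    using LIMSEQ_Suc[OF lim_const_over_n[of 2]] by simp
  then show "(\<lambda>m. R - 2 / real (Suc m)) \<longlonglongrightarrow> R"
    using tendsto_diff[OF tendsto_const[of R]] by fastforce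
qed simp

theorem mainTheorem2:
  fixes R :: real
  assumes "0 \<le> R"
    and "R \<le> 1/2 * log (real CARD('a::{finite,field}))
                 ((real CARD('a))^2 / ((real CARD('a))^2 - real CARD('a) + 1))"
  shows "\<exists>(ns :: nat \<Rightarrow> nat) (ks :: nat \<Rightarrow> nat) (Cs :: nat \<Rightarrow> (nat \<Rightarrow> 'a) set).
           (\<forall>m. 0 < ns m \<and> linear_code (ns m) (ks m) (Cs m) \<and> minimal_code (ns m) (Cs m)
                \<and> real (ks m) / real (ns m) \<le> 1/2 * log (real CARD('a))
                   ((real CARD('a))^2 / ((real CARD('a))^2 - real CARD('a) + 1)))
         \<and> filterlim ns at_top sequentially
         \<and> ((\<lambda>m. real (ks m) / real (ns m)) \<longlonglongrightarrow> R)"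
proof -
  have R: "R \<le> rate_bound (real CARD('a))" using assms(2) by (simp add: rate_bound_def)
  have "\<forall>m. \<exists>C :: (nat \<Rightarrow> 'a) set.
      linear_code (Suc m) (code_dim R m) C \<and> minimal_code (Suc m) C"
    using exists_minimal_code_of_rate[OF code_dim_ne_1 code_dim_le[OF assms(1)] R] by blast
  then obtain Cs :: "nat \<Rightarrow> (nat \<Rightarrow> 'a) set" where
    Cs: "\<And>m. linear_code (Suc m) (code_dim R m) (Cs m) \<and> minimal_code (Suc m) (Cs m)"
    by metis
  have "real (code_dim R m) / real (Suc m) \<le> rate_bound (real CARD('a))" for m
    using code_dim_rate_le[OF assms(1), of m] R by linarith
  with Cs have "\<forall>m. 0 < Suc m \<and> linear_code (Suc m) (code_dim R m) (Cs m)
      \<and> minimal_code (Suc m) (Cs m) \<and> real (code_dim R m) / real (Suc m) \<le> rate_bound (real CARD('a))"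
    by blast
  with filterlim_Suc code_dim_rate_tendsto[OF assms(1)] show ?thesis
    unfolding rate_bound_def by blast
qed

end
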